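(* Let $M$ be a $3$-connected simple matroid with $r(M)\ge 4$, and let $x_1,\dots,x_n,y_1,\dots,y_n$ ($n\ge 3$) be a carambole of $M$ with filament $L=\{y_1,\dots,y_n\}$ and hull $X=\{x_1,\dots,x_n\}$. Then $r^*_M(X)=2$, and $|X|=|L|$ (i.e. $x_1,\dots,x_n$ are distinct).
   Context: A line of $M$ is a rank-$2$ set. For $n\ge3$, a sequence $x_1,\dots,x_n,y_1,\dots,y_n$ of elements of $M$ is a carambole of $M$ if $L:=\{y_1,\dots,y_n\}$ is a line of $M$ with $n$ distinct elements such that $\mathrm{si}(M/L)$ is $3$-connected, and, for each $i$, $(L-y_i)\cup x_i$ is a cocircuit of $M$. $L$ is the filament and $X:=\{x_1,\dots,x_n\}$ the hull of the carambole. $r^*_M$ denotes the corank (rank function of the dual $M^*$). *)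

theory Defs
  imports Main
begin

definition matroid :: "'a set \<Rightarrow> ('a set \<Rightarrow> nat) \<Rightarrow> bool" where
  "matroid E r \<longleftrightarrow> finite E
     \<and> (\<forall>A. A \<subseteq> E \<longrightarrow> r A \<le> card A)
     \<and> (\<forall>A B. A \<subseteq> B \<and> B \<subseteq> E \<longrightarrow> r A \<le> r B)
     \<and> (\<forall>A B. A \<subseteq> E \<and> B \<subseteq> E \<longrightarrow> r (A \<union> B) + r (A \<inter> B) \<le> r A + r B)"

definition indep :: "('a set \<Rightarrow> nat) \<Rightarrow> 'a set \<Rightarrow> bool" where
  "indep r A \<longleftrightarrow> r A = card A"

definition circuit :: "'a set \<Rightarrow> ('a set \<Rightarrow> nat) \<Rightarrow> 'a set \<Rightarrow> bool" where
  "circuit E r C \<longleftrightarrow> C \<subseteq> E \<and> \<not> indep r C \<and> (\<forall>D. D \<subset> C \<longrightarrow> indep r D)"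

definition loop :: "'a set \<Rightarrow> ('a set \<Rightarrow> nat) \<Rightarrow> 'a \<Rightarrow> bool" where
  "loop E r x \<longleftrightarrow> circuit E r {x}"

definition parallel :: "'a set \<Rightarrow> ('a set \<Rightarrow> nat) \<Rightarrow> 'a \<Rightarrow> 'a \<Rightarrow> bool" where
  "parallel E r x y \<longleftrightarrow> x \<noteq> y \<and> circuit E r {x, y}"

text \<open>Simple: no loops and no parallel pairs, i.e. every circuit has at least 3 elements.\<close>
definition simple :: "'a set \<Rightarrow> ('a set \<Rightarrow> nat) \<Rightarrow> bool" where
  "simple E r \<longleftrightarrow> (\<forall>C. circuit E r C \<longrightarrow> card C \<ge> 3)"

definition dual_rank :: "'a set \<Rightarrow> ('a set \<Rightarrow> nat) \<Rightarrow> 'a set \<Rightarrow> nat" where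
  "dual_rank E r A = card A + r (E - A) - r E"

definition cocircuit :: "'a set \<Rightarrow> ('a set \<Rightarrow> nat) \<Rightarrow> 'a set \<Rightarrow> bool" where
  "cocircuit E r C \<longleftrightarrow> circuit E (dual_rank E r) C"

definition contract_rank :: "('a set \<Rightarrow> nat) \<Rightarrow> 'a set \<Rightarrow> 'a set \<Rightarrow> nat" where
  "contract_rank r L A = r (A \<union> L) - r L"

definition separation :: "'a set \<Rightarrow> ('a set \<Rightarrow> nat) \<Rightarrow> nat \<Rightarrow> 'a set \<Rightarrow> bool" where
  "separation E r k A \<longleftrightarrow> A \<subseteq> E \<and> card A \<ge> k \<and> card (E - A) \<ge> k
      \<and> r A + r (E - A) - r E < k"

definition n_connected :: "nat \<Rightarrow> 'a set \<Rightarrow> ('a set \<Rightarrow> nat) \<Rightarrow> bool" where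
  "n_connected n E r \<longleftrightarrow> (\<forall>k A. 1 \<le> k \<and> k < n \<longrightarrow> \<not> separation E r k A)"

definition simplification_set :: "'a set \<Rightarrow> ('a set \<Rightarrow> nat) \<Rightarrow> 'a set \<Rightarrow> bool" where
  "simplification_set E r S \<longleftrightarrow> S \<subseteq> E
     \<and> (\<forall>x\<in>S. \<not> loop E r x)
     \<and> (\<forall>x\<in>S. \<forall>y\<in>S. \<not> parallel E r x y)
     \<and> (\<forall>x\<in>E. \<not> loop E r x \<longrightarrow> x \<in> S \<or> (\<exists>y\<in>S. parallel E r x y))"

text \<open>si(M) is 3-connected (simplifications are unique up to isomorphism, so
  existence of a 3-connected one is the same as all being 3-connected).\<close>
definition si_3_connected :: "'a set \<Rightarrow> ('a set \<Rightarrow> nat) \<Rightarrow> bool" where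
  "si_3_connected E r \<longleftrightarrow> (\<exists>S. simplification_set E r S \<and> n_connected 3 S r)"

definition line :: "'a set \<Rightarrow> ('a set \<Rightarrow> nat) \<Rightarrow> 'a set \<Rightarrow> bool" where
  "line E r L \<longleftrightarrow> L \<subseteq> E \<and> r L = 2"

definition carambole :: "'a set \<Rightarrow> ('a set \<Rightarrow> nat) \<Rightarrow> nat \<Rightarrow> (nat \<Rightarrow> 'a) \<Rightarrow> (nat \<Rightarrow> 'a) \<Rightarrow> bool" where
  "carambole E r n x y \<longleftrightarrow> n \<ge> 3
     \<and> (\<forall>i\<in>{1..n}. x i \<in> E \<and> y i \<in> E)
     \<and> line E r (y ` {1..n}) \<and> card (y ` {1..n}) = n
     \<and> si_3_connected (E - y ` {1..n}) (contract_rank r (y ` {1..n}))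
     \<and> (\<forall>i\<in>{1..n}. cocircuit E r ((y ` {1..n} - {y i}) \<union> {x i}))"

end

theory Submission
  imports Defs
begin

text \<open>Since \<open>r(L) = 2 < r(M)\<close> and \<open>M\<close> is 3-connected, \<open>E - L\<close> spans \<open>M\<close>, so no
  cocircuit lies in \<open>L\<close> and \<open>x\<^sub>i \<notin> L\<close>. The hyperplane \<open>E - ((L - y\<^sub>i) \<union> x\<^sub>i)\<close>
  contains \<open>E - L - x\<^sub>i\<close>, so each \<open>x\<^sub>i\<close> is a coloop of \<open>M \<setminus> L\<close>. If \<open>x\<^sub>i = x\<^sub>j\<close>,
  submodularity on the two hyperplanes through \<open>E - L - x\<^sub>i\<close> would give
  \<open>r(E - L - x\<^sub>i) \<le> r(M) - 2\<close>, which one element cannot repair. Hence \<open>|X| = n\<close>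
  and \<open>r(E - X) \<le> r(M) - n + r(L)\<close>, i.e. \<open>r\<^sup>*(X) \<le> 2\<close>; the reverse inequality is
  3-connectedness applied to \<open>X\<close>.\<close>

lemma matroid_finite: "matroid E r \<Longrightarrow> finite E"
  unfolding matroid_def by blast

lemma matroid_rank_le_card: "matroid E r \<Longrightarrow> A \<subseteq> E \<Longrightarrow> r A \<le> card A"
  unfolding matroid_def by blast

lemma matroid_rank_mono: "matroid E r \<Longrightarrow> A \<subseteq> B \<Longrightarrow> B \<subseteq> E \<Longrightarrow> r A \<le> r B"
  unfolding matroid_def by blast

lemma matroid_submodular:
  "matroid E r \<Longrightarrow> A \<subseteq> E \<Longrightarrow> B \<subseteq> E \<Longrightarrow> r (A \<union> B) + r (A \<inter> B) \<le> r A + r B"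
  unfolding matroid_def by blast

lemma matroid_rank_union_le:
  assumes "matroid E r" "A \<subseteq> E" "B \<subseteq> E"
  shows "r (A \<union> B) \<le> r A + r B"
  using matroid_submodular[OF assms] by linarith

lemma matroid_rank_insert_le:
  assumes m: "matroid E r" and "a \<in> E" "A \<subseteq> E"
  shows "r (insert a A) \<le> r A + 1"
proof -
  have "r (insert a A) \<le> r A + r {a}"
    using matroid_rank_union_le[OF m, of A "{a}"] assms by simp
  moreover have "r {a} \<le> 1"
    using matroid_rank_le_card[OF m, of "{a}"] assms by simp
  ultimately show ?thesis by linarith
qed

lemma cocircuit_subset: "cocircuit E r C \<Longrightarrow> C \<subseteq> E"
  unfolding cocircuit_def circuit_def by blast

lemma cocircuit_complement_rank_less:
  assumes m: "matroid E r" and C: "cocircuit E r C"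
  shows "r (E - C) < r E"
proof -
  have "r (E - C) \<le> r E" by (rule matroid_rank_mono[OF m]) auto
  moreover have "card C + r (E - C) - r E \<noteq> card C"
    using C unfolding cocircuit_def circuit_def indep_def dual_rank_def by blast
  ultimately show ?thesis by linarith
qed

lemma cocircuit_proper_subset_complement_rank:
  assumes m: "matroid E r" and C: "cocircuit E r C" and D: "D \<subset> C" "D \<noteq> {}"
  shows "r (E - D) = r E"
proof -
  have "finite D"
    using D cocircuit_subset[OF C] matroid_finite[OF m] by (meson finite_subset psubset_imp_subset)
  with D have "card D > 0" by auto
  moreover have "r (E - D) \<le> r E" by (rule matroid_rank_mono[OF m]) auto
  moreover have "card D + r (E - D) - r E = card D"
    using C D unfolding cocircuit_def circuit_def indep_def dual_rank_def by blast
  ultimately show ?thesis by linarith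
qed

lemma cocircuit_not_subset_coindependent:
  assumes m: "matroid E r" and C: "cocircuit E r C" and spans: "r (E - L) = r E"
  shows "\<not> C \<subseteq> L"
proof
  assume "C \<subseteq> L"
  then have "r (E - L) \<le> r (E - C)" by (intro matroid_rank_mono[OF m]) auto
  with cocircuit_complement_rank_less[OF m C] spans show False by linarith
qed

lemma cocircuits_no_common_extra_point:
  assumes m: "matroid E r" and LE: "L \<subseteq> E" and spans: "r (E - L) = r E"
    and a: "a \<notin> L" and uv: "u \<in> L" "v \<in> L" "u \<noteq> v"
    and Cu: "cocircuit E r ((L - {u}) \<union> {a})" and Cv: "cocircuit E r ((L - {v}) \<union> {a})"
  shows False
proof -
  define Z where "Z = E - L - {a}"
  have aE: "a \<in> E" using cocircuit_subset[OF Cu] by blast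
  have "E - ((L - {u}) \<union> {a}) = Z \<union> {u}" and "E - ((L - {v}) \<union> {a}) = Z \<union> {v}"
    using uv LE a unfolding Z_def by auto
  then have ru: "r (Z \<union> {u}) < r E" and rv: "r (Z \<union> {v}) < r E"
    using cocircuit_complement_rank_less[OF m Cu] cocircuit_complement_rank_less[OF m Cv] by simp_all
  have "E - ((L - {u}) \<union> {a} - {v}) = (Z \<union> {u}) \<union> (Z \<union> {v})"
    using uv LE a unfolding Z_def by auto
  moreover have "r (E - ((L - {u}) \<union> {a} - {v})) = r E"
    by (rule cocircuit_proper_subset_complement_rank[OF m Cu]) (use uv a in auto)
  ultimately have "r ((Z \<union> {u}) \<union> (Z \<union> {v})) = r E" by simp
  moreover have "(Z \<union> {u}) \<inter> (Z \<union> {v}) = Z" using uv unfolding Z_def by auto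
  moreover have "r ((Z \<union> {u}) \<union> (Z \<union> {v})) + r ((Z \<union> {u}) \<inter> (Z \<union> {v}))
      \<le> r (Z \<union> {u}) + r (Z \<union> {v})"
    using uv LE by (intro matroid_submodular[OF m]) (auto simp: Z_def)
  ultimately have "r Z + 2 \<le> r E" using ru rv by simp
  moreover have "insert a Z = E - L" using aE a unfolding Z_def by auto
  then have "r (E - L) \<le> r Z + 1"
    using matroid_rank_insert_le[OF m aE, of Z] unfolding Z_def by auto
  ultimately show False using spans by linarith
qed

lemma coloops_rank_diff:
  assumes m: "matroid E r" and F: "F \<subseteq> E" "r F = r E"
    and S: "finite S" "\<forall>z\<in>S. r (F - {z}) < r E"
  shows "r (F - S) + card S \<le> r E"
  using S
proof (induction S rule: finite_induct)
  case empty
  then show ?case using F by simp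
next
  case (insert a S)
  have "r ((F - S) \<union> (F - {a})) + r ((F - S) \<inter> (F - {a})) \<le> r (F - S) + r (F - {a})"
    using F by (intro matroid_submodular[OF m]) auto
  moreover have "(F - S) \<union> (F - {a}) = F" using insert by auto
  moreover have "(F - S) \<inter> (F - {a}) = F - insert a S" by auto
  moreover have "r (F - {a}) < r E" using insert by auto
  moreover have "r (F - S) + card S \<le> r E" using insert by auto
  ultimately show ?case using insert F by simp
qed

lemma three_connected_rank_bound:
  assumes "n_connected 3 E r" "A \<subseteq> E" "card A \<ge> 2" "card (E - A) \<ge> 2"
  shows "r A + r (E - A) \<ge> r E + 2"
proof -
  have "\<not> separation E r 2 A" using assms(1) unfolding n_connected_def by simp
  with assms(2-4) show ?thesis unfolding separation_def by simp
qed

lemma three_connected_dual_rank_ge: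
  assumes m: "matroid E r" and "n_connected 3 E r" "A \<subseteq> E" "card A \<ge> 2" "card (E - A) \<ge> 2"
  shows "dual_rank E r A \<ge> 2"
  using three_connected_rank_bound[OF assms(2-)] matroid_rank_le_card[OF m assms(3)]
  unfolding dual_rank_def by linarith

lemma three_connected_line_coindependent:
  assumes m: "matroid E r" and "n_connected 3 E r" "r E \<ge> 4"
    and L: "L \<subseteq> E" "r L = 2" "card L \<ge> 2"
  shows "r (E - L) = r E"
proof -
  have "r E \<le> r L + r (E - L)"
    using matroid_rank_union_le[OF m L(1), of "E - L"] L(1) by (simp add: Un_absorb1)
  then have "card (E - L) \<ge> 2"
    using matroid_rank_le_card[OF m, of "E - L"] assms(3) L(2) by simp
  then have "r L + r (E - L) \<ge> r E + 2"
    using three_connected_rank_bound[OF assms(2) L(1)] L(3) by simp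
  moreover have "r (E - L) \<le> r E" by (rule matroid_rank_mono[OF m]) auto
  ultimately show ?thesis using L(2) by linarith
qed

lemma dual_rank_coloops_le:
  assumes m: "matroid E r" and LE: "L \<subseteq> E" and spans: "r (E - L) = r E"
    and X: "X \<subseteq> E - L" "\<forall>z\<in>X. r (E - L - {z}) < r E"
  shows "dual_rank E r X \<le> r L"
proof -
  have "finite X" using X matroid_finite[OF m] finite_subset by blast
  then have "r (E - L - X) + card X \<le> r E"
    using coloops_rank_diff[OF m _ spans] X by auto
  moreover have "E - X = (E - L - X) \<union> L" using LE X by auto
  then have "r (E - X) \<le> r (E - L - X) + r L"
    using matroid_rank_union_le[OF m, of "E - L - X" L] LE by auto
  ultimately show ?thesis unfolding dual_rank_def by linarith
qed

theorem proposition4p1: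
  fixes E :: "'a set" and r :: "'a set \<Rightarrow> nat" and n :: nat and x y :: "nat \<Rightarrow> 'a"
  assumes "matroid E r"
    and "n_connected 3 E r"
    and "simple E r"
    and "r E \<ge> 4"
    and "carambole E r n x y"
  shows "dual_rank E r (x ` {1..n}) = 2 \<and> card (x ` {1..n}) = card (y ` {1..n})"
proof -
  define L where "L = y ` {1..n}"
  define C where "C i = (L - {y i}) \<union> {x i}" for i
  have n: "n \<ge> 3" and xE: "x ` {1..n} \<subseteq> E" and LE: "L \<subseteq> E" and rL: "r L = 2"
    and cL: "card L = n" and coc: "\<And>i. i \<in> {1..n} \<Longrightarrow> cocircuit E r (C i)"
    using assms(5) unfolding carambole_def line_def L_def C_def by auto
  have spans: "r (E - L) = r E"
    using three_connected_line_coindependent[OF assms(1,2,4) LE rL] cL n by simp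
  have xL: "x i \<notin> L" if "i \<in> {1..n}" for i
    using cocircuit_not_subset_coindependent[OF assms(1) coc[OF that] spans] by (auto simp: C_def)
  have "inj_on y {1..n}" using cL unfolding L_def by (simp add: inj_on_iff_eq_card)
  then have "inj_on x {1..n}"
    using cocircuits_no_common_extra_point[OF assms(1) LE spans] xL coc
    unfolding inj_on_def C_def L_def by (metis imageI)
  then have cX: "card (x ` {1..n}) = n" by (simp add: card_image)
  have coloops: "\<forall>z \<in> x ` {1..n}. r (E - L - {z}) < r E"
  proof
    fix z assume "z \<in> x ` {1..n}"
    then obtain i where i: "i \<in> {1..n}" and z: "z = x i" by blast
    have "r (E - L - {z}) \<le> r (E - C i)" using z by (intro matroid_rank_mono[OF assms(1)]) (auto simp: C_def)
    then show "r (E - L - {z}) < r E" using cocircuit_complement_rank_less[OF assms(1) coc[OF i]] by simp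
  qed
  have "dual_rank E r (x ` {1..n}) \<le> 2"
    using dual_rank_coloops_le[OF assms(1) LE spans _ coloops] xE xL rL by fastforce
  moreover have "card (E - x ` {1..n}) \<ge> card L"
    using LE xL matroid_finite[OF assms(1)] by (intro card_mono) auto
  then have "dual_rank E r (x ` {1..n}) \<ge> 2"
    using three_connected_dual_rank_ge[OF assms(1,2) xE] cX cL n by simp
  ultimately show ?thesis using cX cL unfolding L_def by simp
qed

end
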